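(* Let $W\in\mathscr{W}$, $m\ge1$ an integer, $k>0$, $b\in(0,1)$, and let $\bar r>0$ satisfy $\Omega(\bar r)=b$. Assume $J(\bar r)<\frac{m^2}{4k^2}$ and let $d_\pm=\frac12\pm\bigl(\frac14-\frac{k^2}{m^2}J(\bar r)\bigr)^{1/2}$ (so $0<d_-<\frac12<d_+<1$). Define $U_\pm(r)=(b-\Omega(r))^{d_\pm}$ for $r>\bar r$. Then there exists $\gamma>0$ such that $\mathscr{L}(U_\pm)\ge\gamma U_\pm'>0$ on $(\bar r,\infty)$, where $\mathscr{L}U=-\partial_r\bigl(\mathcal{A}(r)\partial_r^*U\bigr)+\mathcal{B}_b(r)U$.
   Context: $\Omega(r)=r^{-2}\int_0^rW(s)s\,ds$, $\Phi=2\Omega W$, $J=\Phi/(\Omega')^2$. Class $\mathscr{W}$: $\mathcal{C}^1$ $W:[0,\infty)\to(0,\infty)$ with $W'(0)=0$, $W'<0$ on $(0,\infty)$, $\int_0^\infty Wr\,dr<\infty$, $J'<0$ on $(0,\infty)$, $rJ'(r)\to0$ as $r\to\infty$, $W(0)=2$. $\partial_r^*=\partial_r+\frac1r$, $\mathcal{A}(r)=\frac{r^2}{m^2+k^2r^2}$, $\mathcal{B}_b(r)=1-\frac{k^2}{m^2}\frac{\mathcal{A}(r)\Phi(r)}{(\Omega(r)-b)^2}+\frac{r}{\Omega(r)-b}\partial_r\Bigl(\frac{W(r)}{m^2+k^2r^2}\Bigr)$. *)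

theory Defs
  imports "HOL-Analysis.Analysis"
begin

definition Omega :: "(real \<Rightarrow> real) \<Rightarrow> real \<Rightarrow> real" where
  "Omega W r = integral {0..r} (\<lambda>s. W s * s) / r\<^sup>2"

definition Phi :: "(real \<Rightarrow> real) \<Rightarrow> real \<Rightarrow> real" where
  "Phi W r = 2 * Omega W r * W r"

definition J :: "(real \<Rightarrow> real) \<Rightarrow> real \<Rightarrow> real" where
  "J W r = Phi W r / (deriv (Omega W) r)\<^sup>2"

definition classW :: "(real \<Rightarrow> real) \<Rightarrow> bool" where
  "classW W \<longleftrightarrow>
     (\<exists>W'. (\<forall>r\<ge>0. (W has_real_derivative W' r) (at r within {0..}))
          \<and> continuous_on {0..} W'
          \<and> W' 0 = 0 \<and> (\<forall>r>0. W' r < 0))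
   \<and> (\<forall>r\<ge>0. W r > 0)
   \<and> (\<lambda>r. W r * r) integrable_on {0..}
   \<and> (\<forall>r>0. J W differentiable (at r) \<and> deriv (J W) r < 0)
   \<and> ((\<lambda>r. r * deriv (J W) r) \<longlongrightarrow> 0) at_top
   \<and> W 0 = 2"

definition coefA :: "nat \<Rightarrow> real \<Rightarrow> real \<Rightarrow> real" where
  "coefA m k r = r\<^sup>2 / ((real m)\<^sup>2 + k\<^sup>2 * r\<^sup>2)"

definition coefB :: "(real \<Rightarrow> real) \<Rightarrow> nat \<Rightarrow> real \<Rightarrow> real \<Rightarrow> real \<Rightarrow> real" where
  "coefB W m k b r = 1 - k\<^sup>2 / (real m)\<^sup>2 * coefA m k r * Phi W r / (Omega W r - b)\<^sup>2
     + r / (Omega W r - b) * deriv (\<lambda>s. W s / ((real m)\<^sup>2 + k\<^sup>2 * s\<^sup>2)) r"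

definition opL :: "(real \<Rightarrow> real) \<Rightarrow> nat \<Rightarrow> real \<Rightarrow> real \<Rightarrow> (real \<Rightarrow> real) \<Rightarrow> real \<Rightarrow> real" where
  "opL W m k b U r = - deriv (\<lambda>s. coefA m k s * (deriv U s + U s / s)) r + coefB W m k b r * U r"

end

theory Submission
  imports Defs
begin

text \<open>
  Put f = b - Omega and q = - Omega'. As W decreases, W < 2 Omega, so Omega' = (W - 2 Omega)/r < 0,
  f > 0 beyond rbar, and U = f powr d has U' = d q f powr (d - 1) > 0. Expanding L U with
  Omega'' = (W' - 3 Omega')/r writes (f / U) L U as a sum of nonnegative terms plus
  r^2 q^2 (d (1 - d) - k^2 J(r) / m^2) / (D f), where D = m^2 + k^2 r^2; this term is nonnegative too,
  because d (1 - d) = k^2 J(rbar) / m^2 and J decreases. What remains dominates a multiple of d q: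
  on bounded intervals through 2 d q k^2 r^3 / D^2, and for large r through
  f (1 + (k^2 r^2 - m^2) / D^2), which stays bounded below while q < 2 b / r.
\<close>

definition Omega' :: "(real \<Rightarrow> real) \<Rightarrow> real \<Rightarrow> real" where
  "Omega' W r = (W r - 2 * Omega W r) / r"

lemma has_real_derivative_integral_moment:
  fixes W :: "real \<Rightarrow> real"
  assumes "continuous_on {0..} W" and "s > 0"
  shows "((\<lambda>r. integral {0..r} (\<lambda>u. W u * u)) has_real_derivative W s * s) (at s)"
proof -
  have "continuous_on {0..s+1} (\<lambda>u. W u * u)"
    by (intro continuous_intros continuous_on_subset[OF assms(1)]) auto
  from integral_has_real_derivative[OF this, of s] assms(2)
  have "((\<lambda>r. integral {0..r} (\<lambda>u. W u * u)) has_real_derivative W s * s) (at s within {0..s+1})"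
    by auto
  moreover have "at s within {0..s+1} = at s"
    by (intro at_within_interior) (use assms(2) in auto)
  ultimately show ?thesis by simp
qed

lemma has_real_derivative_Omega:
  assumes "continuous_on {0..} W" and "s > 0"
  shows "(Omega W has_real_derivative Omega' W s) (at s)"
proof -
  have "Omega W = (\<lambda>r. integral {0..r} (\<lambda>u. W u * u) / r\<^sup>2)"
    by (rule ext) (simp add: Omega_def)
  moreover have "((\<lambda>r. integral {0..r} (\<lambda>u. W u * u) / r\<^sup>2) has_real_derivative
     ((W s * s) * s\<^sup>2 - integral {0..s} (\<lambda>u. W u * u) * (2 * s)) / (s\<^sup>2)\<^sup>2) (at s)"
    using assms by (auto intro!: derivative_eq_intros has_real_derivative_integral_moment)
  moreover have "((W s * s) * s\<^sup>2 - integral {0..s} (\<lambda>u. W u * u) * (2 * s)) / (s\<^sup>2)\<^sup>2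
      = Omega' W s"
    using assms(2) by (simp add: Omega'_def Omega_def field_simps power2_eq_square)
  ultimately show ?thesis by simp
qed

lemma has_real_derivative_Omega':
  assumes "continuous_on {0..} W" and "(W has_real_derivative W' s) (at s)" and "s > 0"
  shows "(Omega' W has_real_derivative (W' s - 3 * Omega' W s) / s) (at s)"
proof -
  have "Omega' W = (\<lambda>r. (W r - 2 * Omega W r) / r)"
    by (rule ext) (simp add: Omega'_def)
  moreover have "((\<lambda>r. (W r - 2 * Omega W r) / r) has_real_derivative
      ((W' s - 2 * Omega' W s) * s - (W s - 2 * Omega W s) * 1) / (s * s)) (at s)"
    using assms by (auto intro!: derivative_eq_intros has_real_derivative_Omega)
  moreover have "((W' s - 2 * Omega' W s) * s - (W s - 2 * Omega W s) * 1) / (s * s)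
      = (W' s - 3 * Omega' W s) / s"
    using assms(3) by (simp add: Omega'_def field_simps)
  ultimately show ?thesis by simp
qed

lemma W_less_two_Omega:
  assumes "continuous_on {0..} W"
    and "\<forall>s>0. (W has_real_derivative W' s) (at s)" and "\<forall>s>0. W' s < 0"
    and "r > 0"
  shows "W r < 2 * Omega W r"
proof -
  define I where "I = (\<lambda>r. integral {0..r} (\<lambda>u. W u * u))"
  define g where "g = (\<lambda>r. 2 * I r - W r * r\<^sup>2)"
  have "g 0 < g r"
  proof (rule DERIV_pos_imp_increasing_open[OF \<open>r > 0\<close>])
    fix x assume x: "0 < x" "x < r"
    have "(g has_real_derivative 2 * (W x * x) - (W' x * x\<^sup>2 + W x * (2 * x))) (at x)"
      unfolding g_def I_def using x
      by (auto intro!: derivative_eq_intros has_real_derivative_integral_moment assms(1) assms(2)[rule_format])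
    moreover have "2 * (W x * x) - (W' x * x\<^sup>2 + W x * (2 * x)) = - W' x * x\<^sup>2"
      by (simp add: algebra_simps power2_eq_square)
    moreover have "- W' x * x\<^sup>2 > 0" using assms(3) x by (simp add: mult_neg_pos)
    ultimately show "\<exists>y. (g has_real_derivative y) (at x) \<and> y > 0" by metis
  next
    have "continuous_on {0..r} (\<lambda>u. W u * u)"
      by (intro continuous_intros continuous_on_subset[OF assms(1)]) auto
    then have "continuous_on {0..r} I"
      unfolding I_def by (intro indefinite_integral_continuous_1 integrable_continuous_real)
    then show "continuous_on {0..r} g"
      unfolding g_def by (intro continuous_intros continuous_on_subset[OF assms(1)]) auto
  qed
  then have "W r * r\<^sup>2 < 2 * I r" by (simp add: g_def I_def)
  then show ?thesis using \<open>r > 0\<close> by (simp add: Omega_def I_def field_simps)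
qed

lemma Omega'_neg:
  assumes "continuous_on {0..} W"
    and "\<forall>s>0. (W has_real_derivative W' s) (at s)" and "\<forall>s>0. W' s < 0"
    and "r > 0"
  shows "Omega' W r < 0"
  using W_less_two_Omega[OF assms] \<open>r > 0\<close> by (simp add: Omega'_def divide_neg_pos)

lemma Omega_strict_antimono:
  assumes "continuous_on {0..} W"
    and "\<forall>s>0. (W has_real_derivative W' s) (at s)" and "\<forall>s>0. W' s < 0"
    and "0 < x" and "x < y"
  shows "Omega W y < Omega W x"
proof (rule DERIV_neg_imp_decreasing[OF \<open>x < y\<close>])
  fix t assume "x \<le> t" "t \<le> y"
  with \<open>0 < x\<close> have "t > 0" by simp
  then show "\<exists>z. (Omega W has_real_derivative z) (at t) \<and> z < 0"
    using has_real_derivative_Omega[OF assms(1)] Omega'_neg[OF assms(1-3)] by blast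
qed

lemma J_altdef:
  assumes "continuous_on {0..} W" and "r > 0"
  shows "J W r = Phi W r / (Omega' W r)\<^sup>2"
  using DERIV_imp_deriv[OF has_real_derivative_Omega[OF assms]] by (simp add: J_def)

lemma J_pos:
  assumes "continuous_on {0..} W"
    and "\<forall>s>0. (W has_real_derivative W' s) (at s)" and "\<forall>s>0. W' s < 0" and "\<forall>s>0. W s > 0"
    and "r > 0"
  shows "J W r > 0"
proof -
  have "W r > 0" using assms(4,5) by simp
  moreover have "Omega W r > 0" using W_less_two_Omega[OF assms(1-3,5)] \<open>W r > 0\<close> by simp
  moreover have "Omega' W r \<noteq> 0" using Omega'_neg[OF assms(1-3,5)] by simp
  ultimately show ?thesis by (simp add: J_altdef[OF assms(1,5)] Phi_def)
qed

lemma coefA_has_real_derivative: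
  fixes k r :: real
  assumes "m \<ge> 1"
  defines "D \<equiv> (real m)\<^sup>2 + k\<^sup>2 * r\<^sup>2"
  shows "(coefA m k has_real_derivative 2 * r * (real m)\<^sup>2 / D\<^sup>2) (at r)"
proof -
  have "D > 0" unfolding D_def using assms(1) by (simp add: add_pos_nonneg)
  have "((\<lambda>s. s\<^sup>2 / ((real m)\<^sup>2 + k\<^sup>2 * s\<^sup>2)) has_real_derivative
      (2 * r * D - r\<^sup>2 * (2 * k\<^sup>2 * r)) / D\<^sup>2) (at r)"
    using \<open>D > 0\<close> unfolding D_def
    by (auto intro!: derivative_eq_intros simp: power2_eq_square)
  moreover have "2 * r * D - r\<^sup>2 * (2 * k\<^sup>2 * r) = 2 * r * (real m)\<^sup>2"
    by (simp add: D_def algebra_simps power2_eq_square)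
  ultimately show ?thesis by (simp add: coefA_def[abs_def])
qed

lemma coefB_eq:
  fixes k w' :: real
  assumes "(W has_real_derivative w') (at r)" and "m \<ge> 1"
  defines "D \<equiv> (real m)\<^sup>2 + k\<^sup>2 * r\<^sup>2"
  shows "coefB W m k b r = 1 - k\<^sup>2 / (real m)\<^sup>2 * (r\<^sup>2 / D) * Phi W r / (Omega W r - b)\<^sup>2
           + r / (Omega W r - b) * ((w' * D - W r * (2 * k\<^sup>2 * r)) / D\<^sup>2)"
proof -
  have "D > 0" unfolding D_def using assms(2) by (simp add: add_pos_nonneg)
  have "((\<lambda>s. W s / ((real m)\<^sup>2 + k\<^sup>2 * s\<^sup>2)) has_real_derivative
      (w' * D - W r * (2 * k\<^sup>2 * r)) / D\<^sup>2) (at r)"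
    using assms(1) \<open>D > 0\<close> unfolding D_def
    by (auto intro!: derivative_eq_intros simp: power2_eq_square)
  then show ?thesis
    by (simp add: coefB_def coefA_def D_def DERIV_imp_deriv)
qed

lemma opL_eq:
  fixes U U' :: "real \<Rightarrow> real" and k :: real
  assumes "open S" and "r \<in> S" and "S \<subseteq> {0<..}"
    and "\<forall>s\<in>S. (U has_real_derivative U' s) (at s)"
    and "(U' has_real_derivative U'') (at r)" and "m \<ge> 1"
  defines "D \<equiv> (real m)\<^sup>2 + k\<^sup>2 * r\<^sup>2"
  shows "opL W m k b U r = - (2 * r * (real m)\<^sup>2 / D\<^sup>2 * (U' r + U r / r)
           + r\<^sup>2 / D * (U'' + U' r / r - U r / r\<^sup>2)) + coefB W m k b r * U r"
proof -
  have "r > 0" using assms(2,3) by auto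
  have "((\<lambda>s. coefA m k s * (U' s + U s / s)) has_real_derivative
      2 * r * (real m)\<^sup>2 / D\<^sup>2 * (U' r + U r / r) + coefA m k r * (U'' + (U' r * r - U r * 1) / (r * r))) (at r)"
    using assms(2,4,5) \<open>r > 0\<close> unfolding D_def
    by (auto intro!: derivative_eq_intros coefA_has_real_derivative[OF assms(6)])
  moreover have "coefA m k r * (U'' + (U' r * r - U r * 1) / (r * r)) = r\<^sup>2 / D * (U'' + U' r / r - U r / r\<^sup>2)"
  proof -
    have "U'' + (U' r * r - U r * 1) / (r * r) = U'' + U' r / r - U r / r\<^sup>2"
      using \<open>r > 0\<close> by (simp add: field_simps power2_eq_square)
    then show ?thesis by (simp only: coefA_def D_def)
  qed
  ultimately have "((\<lambda>s. coefA m k s * (U' s + U s / s)) has_real_derivative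
      2 * r * (real m)\<^sup>2 / D\<^sup>2 * (U' r + U r / r) + r\<^sup>2 / D * (U'' + U' r / r - U r / r\<^sup>2)) (at r)"
    by simp
  then have "((\<lambda>s. coefA m k s * (deriv U s + U s / s)) has_real_derivative
      2 * r * (real m)\<^sup>2 / D\<^sup>2 * (U' r + U r / r) + r\<^sup>2 / D * (U'' + U' r / r - U r / r\<^sup>2)) (at r)"
    by (rule has_field_derivative_transform_within_open[OF _ assms(1,2)])
       (use assms(4) DERIV_imp_deriv in fastforce)
  then show ?thesis
    unfolding opL_def by (simp only: DERIV_imp_deriv)
qed

lemma has_real_derivative_Omega_powr:
  assumes "continuous_on {0..} W" and "s > 0" and "Omega W s < b"
  shows "((\<lambda>s. (b - Omega W s) powr d) has_real_derivative
           d * (b - Omega W s) powr (d - 1) * - Omega' W s) (at s)"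
proof -
  have "((\<lambda>s. b - Omega W s) has_real_derivative - Omega' W s) (at s)"
    using assms(1,2) by (auto intro!: derivative_eq_intros has_real_derivative_Omega)
  from DERIV_fun_powr[OF this, of d] assms(3) show ?thesis by simp
qed

lemma deriv_Omega_powr:
  assumes "continuous_on {0..} W" and "r > 0" and "Omega W r < b"
  shows "deriv (\<lambda>s. (b - Omega W s) powr d) r
           = (b - Omega W r) powr d / (b - Omega W r) * (d * - Omega' W r)"
  using DERIV_imp_deriv[OF has_real_derivative_Omega_powr[OF assms, of d]] assms(3)
  by (simp add: powr_diff)

text \<open>The computation of L U for U = (b - Omega W) powr d at r, abbreviated by
  P = U r, F = b - Omega W r, q = - Omega' W r, w = W r, w' = W' r, c = k^2 / m^2 and M = m^2.\<close>
lemma opL_powr_identity: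
  fixes P F q w w' Phi c d k r D M :: real
  assumes "F \<noteq> 0" "r \<noteq> 0" "D \<noteq> 0" "M = D - k\<^sup>2 * r\<^sup>2"
  shows "- (2 * r * M / D\<^sup>2 * (d * (P / F) * q + P / r)
            + r\<^sup>2 / D * ((d * (d - 1) * (P / F\<^sup>2) * q\<^sup>2 - d * (P / F) * ((w' + 3 * q) / r))
                         + d * (P / F) * q / r - P / r\<^sup>2))
         + (1 - c * (r\<^sup>2 / D) * Phi / F\<^sup>2 + r / (- F) * ((w' * D - w * (2 * k\<^sup>2 * r)) / D\<^sup>2)) * P
       = P / F * (r\<^sup>2 / (D * F) * (- d * (d - 1) * q\<^sup>2 - c * Phi) + 2 * d * q * k\<^sup>2 * r ^ 3 / D\<^sup>2
           + F * (1 + (k\<^sup>2 * r\<^sup>2 - M) / D\<^sup>2) + (1 - d) * (r / D) * - w' + 2 * k\<^sup>2 * r\<^sup>2 * w / D\<^sup>2)"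
  unfolding assms(4) using assms(1-3) by (simp add: field_simps power2_eq_square power3_eq_cube)

lemma opL_Omega_powr_eq:
  fixes k d rbar r :: real
  assumes cW: "continuous_on {0..} W" and dW: "\<forall>s>0. (W has_real_derivative W' s) (at s)"
    and "rbar \<ge> 0" and below: "\<forall>s>rbar. Omega W s < b" and "r > rbar" and "m \<ge> 1"
  defines "f \<equiv> b - Omega W r" and "q \<equiv> - Omega' W r" and "D \<equiv> (real m)\<^sup>2 + k\<^sup>2 * r\<^sup>2"
  shows "opL W m k b (\<lambda>s. (b - Omega W s) powr d) r
      = f powr d / f * (r\<^sup>2 / (D * f) * (- d * (d - 1) * q\<^sup>2 - k\<^sup>2 / (real m)\<^sup>2 * Phi W r)
           + 2 * d * q * k\<^sup>2 * r ^ 3 / D\<^sup>2 + f * (1 + (k\<^sup>2 * r\<^sup>2 - (real m)\<^sup>2) / D\<^sup>2)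
           + (1 - d) * (r / D) * - W' r + 2 * k\<^sup>2 * r\<^sup>2 * W r / D\<^sup>2)"
proof -
  define U1 where "U1 = (\<lambda>s. d * (b - Omega W s) powr (d - 1) * - Omega' W s)"
  have "r > 0" "f > 0" using assms(3,5) below \<open>r > rbar\<close> by (auto simp: f_def)
  have "D > 0" unfolding D_def using \<open>m \<ge> 1\<close> by (simp add: add_pos_nonneg)
  have dU: "\<forall>s\<in>{rbar<..}. ((\<lambda>s. (b - Omega W s) powr d) has_real_derivative U1 s) (at s)"
    unfolding U1_def using assms(3)
    by (intro ballI has_real_derivative_Omega_powr cW) (use below in auto)
  have "(U1 has_real_derivative d * ((d - 1) * f powr (d - 1 - 1) * q) * q
      + d * f powr (d - 1) * - ((W' r - 3 * Omega' W r) / r)) (at r)"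
    unfolding U1_def f_def q_def using \<open>r > 0\<close> below \<open>r > rbar\<close>
    by (auto intro!: derivative_eq_intros has_real_derivative_Omega has_real_derivative_Omega' cW
        dW[rule_format] simp: algebra_simps)
  moreover have "d * ((d - 1) * f powr (d - 1 - 1) * q) * q
      + d * f powr (d - 1) * - ((W' r - 3 * Omega' W r) / r)
      = d * (d - 1) * (f powr d / f\<^sup>2) * q\<^sup>2 - d * (f powr d / f) * ((W' r + 3 * q) / r)"
    using \<open>f > 0\<close> by (simp add: q_def powr_diff power2_eq_square)
  ultimately have dU1: "(U1 has_real_derivative
      d * (d - 1) * (f powr d / f\<^sup>2) * q\<^sup>2 - d * (f powr d / f) * ((W' r + 3 * q) / r)) (at r)"
    by simp
  have U1r: "U1 r = d * (f powr d / f) * q"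
    using \<open>f > 0\<close> by (simp add: U1_def f_def q_def powr_diff)
  have "r \<in> {rbar<..}" "{rbar<..} \<subseteq> {0<..}" using assms(3,5) by auto
  have "Omega W r - b = - f" by (simp add: f_def)
  have "(b - Omega W r) powr d = f powr d" by (simp add: f_def)
  show ?thesis
    unfolding opL_eq[OF open_greaterThan \<open>r \<in> {rbar<..}\<close> \<open>{rbar<..} \<subseteq> {0<..}\<close> dU dU1
        \<open>m \<ge> 1\<close>]
      coefB_eq[OF dW[rule_format, OF \<open>r > 0\<close>] \<open>m \<ge> 1\<close>] U1r D_def
      \<open>Omega W r - b = - f\<close> \<open>(b - Omega W r) powr d = f powr d\<close> power2_minus
    by (rule opL_powr_identity) (use \<open>f > 0\<close> \<open>r > 0\<close> \<open>D > 0\<close> D_def in auto)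
qed

lemma opL_Omega_powr_ge:
  fixes k d rbar r :: real
  assumes cW: "continuous_on {0..} W" and dW: "\<forall>s>0. (W has_real_derivative W' s) (at s)"
    and W'_neg: "\<forall>s>0. W' s < 0" and W_nonneg: "\<forall>s>0. W s \<ge> 0"
    and "rbar \<ge> 0" and below: "\<forall>s>rbar. Omega W s < b" and "r > rbar" and "m \<ge> 1"
    and "d \<le> 1" and J_le: "k\<^sup>2 / (real m)\<^sup>2 * J W r \<le> d * (1 - d)"
  defines "f \<equiv> b - Omega W r" and "q \<equiv> - Omega' W r" and "D \<equiv> (real m)\<^sup>2 + k\<^sup>2 * r\<^sup>2"
  shows "opL W m k b (\<lambda>s. (b - Omega W s) powr d) r
      \<ge> f powr d / f * (2 * d * q * k\<^sup>2 * r ^ 3 / D\<^sup>2 + f * (1 + (k\<^sup>2 * r\<^sup>2 - (real m)\<^sup>2) / D\<^sup>2))"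
proof -
  have "r > 0" "f > 0" using assms(5,7) below \<open>r > rbar\<close> by (auto simp: f_def)
  have "D > 0" unfolding D_def using \<open>m \<ge> 1\<close> by (simp add: add_pos_nonneg)
  have "q > 0" using Omega'_neg[OF cW dW W'_neg \<open>r > 0\<close>] by (simp add: q_def)
  have "Phi W r = J W r * q\<^sup>2"
    using J_altdef[OF cW \<open>r > 0\<close>] \<open>q > 0\<close> by (simp add: q_def)
  then have "- d * (d - 1) * q\<^sup>2 - k\<^sup>2 / (real m)\<^sup>2 * Phi W r
      = (d * (1 - d) - k\<^sup>2 / (real m)\<^sup>2 * J W r) * q\<^sup>2"
    by (simp add: algebra_simps)
  then have "r\<^sup>2 / (D * f) * (- d * (d - 1) * q\<^sup>2 - k\<^sup>2 / (real m)\<^sup>2 * Phi W r) \<ge> 0"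
    using J_le \<open>D > 0\<close> \<open>f > 0\<close> by simp
  moreover have "(1 - d) * (r / D) * - W' r \<ge> 0"
    using \<open>d \<le> 1\<close> \<open>r > 0\<close> \<open>D > 0\<close> W'_neg[rule_format, OF \<open>r > 0\<close>]
    by (intro mult_nonneg_nonneg) auto
  moreover have "2 * k\<^sup>2 * r\<^sup>2 * W r / D\<^sup>2 \<ge> 0"
    using W_nonneg[rule_format, OF \<open>r > 0\<close>] by simp
  ultimately show ?thesis
    unfolding opL_Omega_powr_eq[OF cW dW assms(5) below \<open>r > rbar\<close> \<open>m \<ge> 1\<close>]
      f_def[symmetric] q_def[symmetric] D_def[symmetric]
    using \<open>f > 0\<close> by (intro mult_left_mono) auto
qed

lemma exists_uniform_rate_bound:
  fixes f q :: "real \<Rightarrow> real" and k rbar C d :: real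
  assumes "rbar > 0" and "k > 0" and "m \<ge> 1" and "0 \<le> d" and "d \<le> 1" and "C > 0"
    and f_pos: "\<forall>r>rbar. f r > 0" and f_mono: "mono_on {rbar<..} f"
    and q_pos: "\<forall>r>rbar. q r > 0" and q_le: "\<forall>r>rbar. r * q r < C"
  shows "\<exists>\<gamma>>0. \<forall>r>rbar. \<gamma> * (d * q r)
           \<le> 2 * d * q r * k\<^sup>2 * r ^ 3 / ((real m)\<^sup>2 + k\<^sup>2 * r\<^sup>2)\<^sup>2
             + f r * (1 + (k\<^sup>2 * r\<^sup>2 - (real m)\<^sup>2) / ((real m)\<^sup>2 + k\<^sup>2 * r\<^sup>2)\<^sup>2)"
proof -
  define R where "R = max (rbar + 1) (real m / k)"
  have "R > rbar" "R \<ge> real m / k" by (auto simp: R_def)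
  define c1 where "c1 = 2 * k\<^sup>2 * rbar ^ 3 / ((real m)\<^sup>2 + k\<^sup>2 * R\<^sup>2)\<^sup>2"
  define c2 where "c2 = f R * R / C"
  have "(real m)\<^sup>2 > 0" using \<open>m \<ge> 1\<close> by simp
  then have "(real m)\<^sup>2 + k\<^sup>2 * R\<^sup>2 > 0" by (simp add: add_pos_nonneg)
  then have "c1 > 0" unfolding c1_def using \<open>k > 0\<close> \<open>rbar > 0\<close> by simp
  have "c2 > 0" unfolding c2_def using f_pos \<open>R > rbar\<close> \<open>rbar > 0\<close> \<open>C > 0\<close> by simp
  show ?thesis
  proof (intro exI[of _ "min c1 c2"] conjI allI impI)
    show "min c1 c2 > 0" using \<open>c1 > 0\<close> \<open>c2 > 0\<close> by simp
    fix r assume "r > rbar"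
    define D where "D = (real m)\<^sup>2 + k\<^sup>2 * r\<^sup>2"
    define E where "E = 1 + (k\<^sup>2 * r\<^sup>2 - (real m)\<^sup>2) / D\<^sup>2"
    have "r > 0" "f r > 0" "q r > 0" using \<open>r > rbar\<close> \<open>rbar > 0\<close> f_pos q_pos by auto
    have "(real m)\<^sup>2 \<ge> 1" using \<open>m \<ge> 1\<close> by (intro one_le_power) simp
    moreover have "k\<^sup>2 * r\<^sup>2 \<ge> 0" by simp
    ultimately have "D \<ge> 1" unfolding D_def by linarith
    have "E > 0"
    proof -
      have "D\<^sup>2 \<ge> D" using \<open>D \<ge> 1\<close> by (simp add: power2_eq_square)
      then have "D\<^sup>2 + (k\<^sup>2 * r\<^sup>2 - (real m)\<^sup>2) > 0"
        unfolding D_def using \<open>k > 0\<close> \<open>r > 0\<close> by (smt (verit) zero_less_power mult_pos_pos)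
      then show ?thesis unfolding E_def using \<open>D \<ge> 1\<close> by (simp add: field_simps)
    qed
    have "min c1 c2 * (d * q r) \<le> 2 * d * q r * k\<^sup>2 * r ^ 3 / D\<^sup>2 + f r * E"
    proof (cases "r \<le> R")
      case True
      have "D \<le> (real m)\<^sup>2 + k\<^sup>2 * R\<^sup>2"
        unfolding D_def using True \<open>r > 0\<close> by (intro add_left_mono mult_left_mono power_mono) auto
      then have "c1 \<le> 2 * k\<^sup>2 * r ^ 3 / D\<^sup>2"
        unfolding c1_def using \<open>r > rbar\<close> \<open>rbar > 0\<close> \<open>D \<ge> 1\<close>
        by (intro frac_le mult_left_mono power_mono) auto
      then have "min c1 c2 * (d * q r) \<le> 2 * k\<^sup>2 * r ^ 3 / D\<^sup>2 * (d * q r)"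
        using \<open>0 \<le> d\<close> \<open>q r > 0\<close> by (intro mult_right_mono) auto
      moreover have "f r * E \<ge> 0" using \<open>f r > 0\<close> \<open>E > 0\<close> by simp
      ultimately show ?thesis by (simp add: field_simps)
    next
      case False
      have "E \<ge> 1"
      proof -
        have "real m \<le> k * R" using \<open>R \<ge> real m / k\<close> \<open>k > 0\<close> by (simp add: field_simps)
        also have "\<dots> \<le> k * r" using False \<open>k > 0\<close> by simp
        finally have "real m \<le> k * r" .
        then have "(real m)\<^sup>2 \<le> (k * r)\<^sup>2" by (intro power_mono) auto
        then show ?thesis unfolding E_def by (simp add: power_mult_distrib)
      qed
      have "q r < C / R"
      proof -
        have "q r < C / r" using q_le \<open>r > rbar\<close> \<open>r > 0\<close> by (simp add: field_simps)
        also have "C / r < C / R"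
          using False \<open>R > rbar\<close> \<open>rbar > 0\<close> \<open>C > 0\<close> by (intro divide_strict_left_mono) auto
        finally show ?thesis .
      qed
      have "min c1 c2 * (d * q r) \<le> c2 * q r"
        using \<open>0 \<le> d\<close> \<open>d \<le> 1\<close> \<open>q r > 0\<close> \<open>c2 > 0\<close>
        by (intro mult_mono) (auto simp: mult_le_cancel_right1)
      also have "\<dots> < c2 * (C / R)" using \<open>q r < C / R\<close> \<open>c2 > 0\<close> by (rule mult_strict_left_mono)
      also have "\<dots> = f R" unfolding c2_def using \<open>R > rbar\<close> \<open>rbar > 0\<close> \<open>C > 0\<close> by simp
      also have "\<dots> \<le> f r" using f_mono False \<open>R > rbar\<close> by (auto intro: mono_onD)
      also have "\<dots> \<le> f r * E" using \<open>E \<ge> 1\<close> \<open>f r > 0\<close> by simp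
      finally have "min c1 c2 * (d * q r) < f r * E" .
      moreover have "2 * d * q r * k\<^sup>2 * r ^ 3 / D\<^sup>2 \<ge> 0"
        using \<open>0 \<le> d\<close> \<open>q r > 0\<close> \<open>r > 0\<close> by simp
      ultimately show ?thesis by linarith
    qed
    then show "min c1 c2 * (d * q r) \<le> 2 * d * q r * k\<^sup>2 * r ^ 3 / ((real m)\<^sup>2 + k\<^sup>2 * r\<^sup>2)\<^sup>2
        + f r * (1 + (k\<^sup>2 * r\<^sup>2 - (real m)\<^sup>2) / ((real m)\<^sup>2 + k\<^sup>2 * r\<^sup>2)\<^sup>2)"
      by (simp only: D_def E_def)
  qed
qed

lemma exists_uniform_opL_Omega_powr_bound:
  fixes k d rbar b :: real
  assumes cW: "continuous_on {0..} W" and dW: "\<forall>s>0. (W has_real_derivative W' s) (at s)"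
    and W'_neg: "\<forall>s>0. W' s < 0" and W_pos: "\<forall>s>0. W s > 0"
    and "rbar > 0" and "b > 0" and below: "\<forall>s>rbar. Omega W s < b" and "k > 0" and "m \<ge> 1"
    and "0 < d" and "d \<le> 1" and J_le: "\<forall>r>rbar. k\<^sup>2 / (real m)\<^sup>2 * J W r \<le> d * (1 - d)"
  shows "\<exists>\<gamma>>0. \<forall>r>rbar.
           opL W m k b (\<lambda>s. (b - Omega W s) powr d) r \<ge> \<gamma> * deriv (\<lambda>s. (b - Omega W s) powr d) r
           \<and> deriv (\<lambda>s. (b - Omega W s) powr d) r > 0"
proof -
  have q_pos: "\<forall>r>rbar. - Omega' W r > 0"
    using Omega'_neg[OF cW dW W'_neg] \<open>rbar > 0\<close> by auto
  have "mono_on {rbar<..} (\<lambda>r. b - Omega W r)"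
    using Omega_strict_antimono[OF cW dW W'_neg] \<open>rbar > 0\<close>
    by (auto intro!: mono_onI simp: le_less)
  moreover have "\<forall>r>rbar. r * - Omega' W r < 2 * b"
  proof (intro allI impI)
    fix r assume "r > rbar"
    then have "W r > 0" "Omega W r < b" using W_pos below \<open>rbar > 0\<close> by auto
    then show "r * - Omega' W r < 2 * b" using \<open>r > rbar\<close> \<open>rbar > 0\<close> by (simp add: Omega'_def)
  qed
  ultimately obtain \<gamma> where "\<gamma> > 0" and \<gamma>: "\<forall>r>rbar. \<gamma> * (d * - Omega' W r)
      \<le> 2 * d * - Omega' W r * k\<^sup>2 * r ^ 3 / ((real m)\<^sup>2 + k\<^sup>2 * r\<^sup>2)\<^sup>2
        + (b - Omega W r) * (1 + (k\<^sup>2 * r\<^sup>2 - (real m)\<^sup>2) / ((real m)\<^sup>2 + k\<^sup>2 * r\<^sup>2)\<^sup>2)"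
    using exists_uniform_rate_bound[of rbar k m d "2 * b" "\<lambda>r. b - Omega W r" "\<lambda>r. - Omega' W r"]
      assms(5-6,8-11) below q_pos by auto
  show ?thesis
  proof (intro exI[of _ \<gamma>] conjI allI impI \<open>\<gamma> > 0\<close>)
    fix r assume "r > rbar"
    then have "r > 0" "Omega W r < b" using \<open>rbar > 0\<close> below by auto
    have "(b - Omega W r) powr d / (b - Omega W r) * (\<gamma> * (d * - Omega' W r))
        \<le> (b - Omega W r) powr d / (b - Omega W r)
          * (2 * d * - Omega' W r * k\<^sup>2 * r ^ 3 / ((real m)\<^sup>2 + k\<^sup>2 * r\<^sup>2)\<^sup>2
             + (b - Omega W r) * (1 + (k\<^sup>2 * r\<^sup>2 - (real m)\<^sup>2) / ((real m)\<^sup>2 + k\<^sup>2 * r\<^sup>2)\<^sup>2))"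
      using \<gamma> \<open>r > rbar\<close> \<open>Omega W r < b\<close> by (intro mult_left_mono) auto
    also have "\<dots> \<le> opL W m k b (\<lambda>s. (b - Omega W s) powr d) r"
      using W_pos \<open>rbar > 0\<close> \<open>r > rbar\<close> \<open>d \<le> 1\<close> J_le
      by (intro opL_Omega_powr_ge[OF cW dW W'_neg _ _ below \<open>r > rbar\<close> \<open>m \<ge> 1\<close>]) auto
    finally show "opL W m k b (\<lambda>s. (b - Omega W s) powr d) r
        \<ge> \<gamma> * deriv (\<lambda>s. (b - Omega W s) powr d) r"
      unfolding deriv_Omega_powr[OF cW \<open>r > 0\<close> \<open>Omega W r < b\<close>] by (simp add: algebra_simps)
    show "deriv (\<lambda>s. (b - Omega W s) powr d) r > 0"
      unfolding deriv_Omega_powr[OF cW \<open>r > 0\<close> \<open>Omega W r < b\<close>]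
      using q_pos \<open>r > rbar\<close> \<open>0 < d\<close> \<open>Omega W r < b\<close>
      by (intro mult_pos_pos divide_pos_pos) auto
  qed
qed

lemma classW_E:
  assumes "classW W"
  obtains W' where "continuous_on {0..} W" and "\<forall>s>0. (W has_real_derivative W' s) (at s)"
    and "\<forall>s>0. W' s < 0" and "\<forall>s\<ge>0. W s > 0"
proof -
  obtain W' where W': "\<forall>r\<ge>0. (W has_real_derivative W' r) (at r within {0..})" "\<forall>r>0. W' r < 0"
    using assms unfolding classW_def by blast
  have "continuous_on {0..} W"
    unfolding continuous_on_eq_continuous_within using W'(1) by (auto intro: DERIV_continuous)
  moreover have "(W has_real_derivative W' s) (at s)" if "s > 0" for s
  proof -
    have "at s within {0..} = at s" using that by (intro at_within_interior) auto
    then show ?thesis using W'(1) that by (metis less_imp_le)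
  qed
  moreover have "\<forall>s\<ge>0. W s > 0" using assms unfolding classW_def by blast
  ultimately show thesis using that W'(2) by blast
qed

lemma classW_J_antimono:
  assumes "classW W" and "0 < x" and "x \<le> y"
  shows "J W y \<le> J W x"
proof (rule DERIV_nonpos_imp_nonincreasing[OF \<open>x \<le> y\<close>])
  fix t assume "x \<le> t" "t \<le> y"
  with assms have "J W differentiable (at t)" "deriv (J W) t < 0"
    unfolding classW_def by auto
  then show "\<exists>z. (J W has_real_derivative z) (at t) \<and> z \<le> 0"
    using DERIV_deriv_iff_real_differentiable by fastforce
qed

lemma root_of_x_mult_one_minus_x:
  fixes t d :: real
  assumes "0 < t" and "t < 1/4" and "d \<in> {1/2 + sqrt (1/4 - t), 1/2 - sqrt (1/4 - t)}"
  shows "0 < d" and "d < 1" and "d * (1 - d) = t"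
proof -
  define s where "s = sqrt (1/4 - t)"
  have d: "d = 1/2 + s \<or> d = 1/2 - s" using assms(3) by (auto simp: s_def)
  have "s < sqrt (1/4)" unfolding s_def using assms(1,2) by (intro real_sqrt_less_mono) simp
  moreover have "sqrt (1/4 :: real) = 1/2" by (simp add: real_sqrt_divide)
  moreover have "s \<ge> 0" unfolding s_def using assms(2) by simp
  ultimately show "0 < d" "d < 1" using d by auto
  have "(1/2 + s) * (1 - (1/2 + s)) = 1/4 - s\<^sup>2" "(1/2 - s) * (1 - (1/2 - s)) = 1/4 - s\<^sup>2"
    by (simp_all add: algebra_simps power2_eq_square)
  then have "d * (1 - d) = 1/4 - s\<^sup>2" using d by auto
  also have "s\<^sup>2 = 1/4 - t" unfolding s_def using assms(2) by simp
  finally show "d * (1 - d) = t" by simp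
qed

theorem lemma4p4:
  fixes W :: "real \<Rightarrow> real" and m :: nat and k b rbar d :: real
  assumes "classW W"
    and "m \<ge> 1" and "k > 0" and "0 < b" and "b < 1"
    and "rbar > 0" and "Omega W rbar = b"
    and "J W rbar < (real m)\<^sup>2 / (4 * k\<^sup>2)"
    and "d \<in> {1/2 + sqrt (1/4 - k\<^sup>2 / (real m)\<^sup>2 * J W rbar),
              1/2 - sqrt (1/4 - k\<^sup>2 / (real m)\<^sup>2 * J W rbar)}"
  shows "\<exists>\<gamma>>0. \<forall>r>rbar.
           opL W m k b (\<lambda>s. (b - Omega W s) powr d) r
             \<ge> \<gamma> * deriv (\<lambda>s. (b - Omega W s) powr d) r
           \<and> deriv (\<lambda>s. (b - Omega W s) powr d) r > 0"
proof -
  obtain W' where cW: "continuous_on {0..} W" and dW: "\<forall>s>0. (W has_real_derivative W' s) (at s)"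
    and W'_neg: "\<forall>s>0. W' s < 0" and "\<forall>s\<ge>0. W s > 0"
    using classW_E[OF assms(1)] by blast
  then have W_pos: "\<forall>s>0. W s > 0" by simp
  have below: "\<forall>s>rbar. Omega W s < b"
    using Omega_strict_antimono[OF cW dW W'_neg \<open>rbar > 0\<close>] assms(7) by auto
  define t where "t = k\<^sup>2 / (real m)\<^sup>2 * J W rbar"
  have "0 < t" "t < 1/4"
    using J_pos[OF cW dW W'_neg W_pos \<open>rbar > 0\<close>] assms(2,3,8) by (simp_all add: t_def field_simps)
  moreover have "d \<in> {1/2 + sqrt (1/4 - t), 1/2 - sqrt (1/4 - t)}"
    using assms(9) by (simp only: t_def)
  ultimately have "0 < d" "d < 1" "d * (1 - d) = t"
    by (fact root_of_x_mult_one_minus_x)+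
  have "\<forall>r>rbar. k\<^sup>2 / (real m)\<^sup>2 * J W r \<le> d * (1 - d)"
    unfolding \<open>d * (1 - d) = t\<close> t_def
    using classW_J_antimono[OF assms(1,6)] by (auto intro!: divide_right_mono mult_left_mono)
  with \<open>0 < d\<close> \<open>d < 1\<close> show ?thesis
    by (intro exists_uniform_opL_Omega_powr_bound[OF cW dW W'_neg W_pos assms(6,4) below assms(3,2)]) auto
qed

end
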